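(* Let $N\ge 0$. Given infinite vectors $U_1,\dots,U_{N+1}$ and $I$ with entries in $M$, there exist unique infinite vectors $U'_1,\dots,U'_{N+1}$ and $I'$ with entries in $M$ such that $$F_{N+1}(U'_{N+1})\cdots F_2(U'_2)F_1(U'_1)E(I)=E(I')F_{N+1}(U_{N+1})\cdots F_2(U_2)F_1(U_1).$$ Moreover, the resulting map $(U_i,I)\mapsto(U'_i,I')$ is expressed by subtraction-free rational expressions (terms built from $+,\cdot,{}^{-1},1$).
   Context: $M$ is the semifield of germs at $\epsilon=0$ of continuous positive functions $f(\epsilon)$, $\epsilon>0$, with $\lim_{\epsilon\to+0}\epsilon\log f(\epsilon)\in\mathbb{R}$, with usual addition, multiplication and multiplicative inverse. For an infinite vector $I=(I_1,I_2,\dots)$, $E(I)$ is the infinite upper bidiagonal matrix with $I_1,I_2,\dots$ on the diagonal and $1$ on the superdiagonal. For an infinite vector $V=(V_1,V_2,\dots)$, $F(V)$ is the infinite lower bidiagonal matrix with $1$ on the diagonal and $-V_1,-V_2,\dots$ on the subdiagonal, and $F_k(V)=\mathrm{diag}(\mathrm{Id}_{k-1},F(V))$. *)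

theory Defs
  imports "HOL-Analysis.Analysis"
begin

text \<open>Elements of the semifield M are represented by functions real => real,
  read as germs at 0 from the right (epsilon > 0).\<close>

definition inM :: "(real \<Rightarrow> real) \<Rightarrow> bool" where
  "inM f \<longleftrightarrow> (\<exists>\<delta>>0. continuous_on {0<..<\<delta>} f \<and> (\<forall>e\<in>{0<..<\<delta>}. 0 < f e)
      \<and> (\<exists>L::real. ((\<lambda>e. e * ln (f e)) \<longlongrightarrow> L) (at_right 0)))"

definition germ_eq :: "(real \<Rightarrow> real) \<Rightarrow> (real \<Rightarrow> real) \<Rightarrow> bool" where
  "germ_eq f g \<longleftrightarrow> (\<forall>\<^sub>F e in at_right 0. f e = g e)"

type_synonym imat = "nat \<Rightarrow> nat \<Rightarrow> real"

definition imult :: "imat \<Rightarrow> imat \<Rightarrow> imat" where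
  "imult A B = (\<lambda>i j. \<Sum>k\<in>{k. A i k \<noteq> 0}. A i k * B k j)"

definition iId :: imat where
  "iId = (\<lambda>i j. if i = j then 1 else 0)"

text \<open>E(I): I on the diagonal, 1 on the superdiagonal. Vector entry I 0 is I_1.\<close>
definition Emat :: "(nat \<Rightarrow> real) \<Rightarrow> imat" where
  "Emat I = (\<lambda>i j. if j = i then I i else if j = Suc i then 1 else 0)"

definition Fmat :: "(nat \<Rightarrow> real) \<Rightarrow> imat" where
  "Fmat V = (\<lambda>i j. if i = j then 1 else if i = Suc j then - V j else 0)"

text \<open>F_k(V) = diag(Id_{k-1}, F(V)) for k >= 1.\<close>
definition Fkmat :: "nat \<Rightarrow> (nat \<Rightarrow> real) \<Rightarrow> imat" where
  "Fkmat k V = (\<lambda>i j. if i < k - 1 \<or> j < k - 1 then (if i = j then 1 else 0)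
                       else Fmat V (i - (k - 1)) (j - (k - 1)))"

fun prodF :: "(nat \<Rightarrow> nat \<Rightarrow> real) \<Rightarrow> nat \<Rightarrow> imat" where
  "prodF U 0 = iId"
| "prodF U (Suc n) = imult (Fkmat (Suc n) (U (Suc n))) (prodF U n)"

definition rel_eq :: "nat \<Rightarrow> (nat \<Rightarrow> nat \<Rightarrow> real \<Rightarrow> real) \<Rightarrow> (nat \<Rightarrow> real \<Rightarrow> real)
   \<Rightarrow> (nat \<Rightarrow> nat \<Rightarrow> real \<Rightarrow> real) \<Rightarrow> (nat \<Rightarrow> real \<Rightarrow> real) \<Rightarrow> bool" where
  "rel_eq N U I U' I' \<longleftrightarrow>
     (\<forall>i j. \<forall>\<^sub>F e in at_right 0.
        imult (prodF (\<lambda>k m. U' k m e) (Suc N)) (Emat (\<lambda>m. I m e)) i j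
      = imult (Emat (\<lambda>m. I' m e)) (prodF (\<lambda>k m. U k m e) (Suc N)) i j)"

text \<open>Subtraction-free rational expressions in variables: UV k i stands for the
  i-th entry of U_k, IV i for the i-th entry of I.\<close>
datatype var = UV nat nat | IV nat

datatype sfexpr = SVar var | SOne | SAdd sfexpr sfexpr | SMul sfexpr sfexpr | SInv sfexpr

fun sf_eval :: "(var \<Rightarrow> real \<Rightarrow> real) \<Rightarrow> sfexpr \<Rightarrow> real \<Rightarrow> real" where
  "sf_eval \<rho> (SVar v) = \<rho> v"
| "sf_eval \<rho> SOne = (\<lambda>e. 1)"
| "sf_eval \<rho> (SAdd a b) = (\<lambda>e. sf_eval \<rho> a e + sf_eval \<rho> b e)"
| "sf_eval \<rho> (SMul a b) = (\<lambda>e. sf_eval \<rho> a e * sf_eval \<rho> b e)"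
| "sf_eval \<rho> (SInv a) = (\<lambda>e. inverse (sf_eval \<rho> a e))"

definition inp :: "(nat \<Rightarrow> nat \<Rightarrow> real \<Rightarrow> real) \<Rightarrow> (nat \<Rightarrow> real \<Rightarrow> real) \<Rightarrow> var \<Rightarrow> real \<Rightarrow> real" where
  "inp U I v = (case v of UV k i \<Rightarrow> U k i | IV i \<Rightarrow> I i)"

end

theory Submission
  imports Defs
begin

text \<open>All matrices involved are lower unitriangular or banded above the diagonal, so every
  entry of a product is a finite sum and the first n rows of a product only involve finitely
  many entries of its factors.  Existence: E(I) is moved to the left through F_1, ..., F_{N+1}
  one factor at a time, using F_k(V) E(J) = E(J') F_k(W), where V and J' are subtraction-free
  rational in J and W.  Uniqueness: if P E(I) = E(J) Q and P' E(I) = E(J') Q with P, P', Q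
  unit lower triangular, then L = P' P^{-1} is unit lower triangular with L E(J) = E(J'),
  which forces L = Id and J = J' as soon as the entries of J are nonzero; and a product
  F_{N+1}(U_{N+1}) \<cdots> F_1(U_1) with nonzero entries determines its factors.  Elements of M
  are eventually positive, which supplies all nonvanishing conditions, and M is closed under
  +, \<times> and inverse.\<close>

definition banded :: "nat \<Rightarrow> imat \<Rightarrow> bool" where
  "banded d A \<longleftrightarrow> (\<forall>i k. A i k \<noteq> 0 \<longrightarrow> k \<le> i + d)"

definition rows_eq :: "nat \<Rightarrow> imat \<Rightarrow> imat \<Rightarrow> bool" where
  "rows_eq n A B \<longleftrightarrow> (\<forall>i<n. \<forall>j. A i j = B i j)"

definition unit_lower :: "imat \<Rightarrow> bool" where
  "unit_lower A \<longleftrightarrow> (\<forall>i. A i i = 1) \<and> (\<forall>i j. i < j \<longrightarrow> A i j = 0)"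

lemma imult_eq_sum:
  assumes "finite {k. A i k \<noteq> 0}" "finite T"
    and "\<And>k. A i k \<noteq> 0 \<Longrightarrow> B k j \<noteq> 0 \<Longrightarrow> k \<in> T"
  shows "imult A B i j = (\<Sum>k\<in>T. A i k * B k j)"
proof -
  have "imult A B i j = (\<Sum>k\<in>{k. A i k \<noteq> 0} \<union> T. A i k * B k j)"
    unfolding imult_def by (rule sum.mono_neutral_left) (use assms in auto)
  also have "\<dots> = (\<Sum>k\<in>T. A i k * B k j)"
    by (rule sum.mono_neutral_right) (use assms in auto)
  finally show ?thesis .
qed

lemma banded_row_finite: "banded d A \<Longrightarrow> finite {k. A i k \<noteq> 0}"
  unfolding banded_def by (rule finite_subset[of _ "{..i+d}"]) auto

lemma imult_banded: "banded d A \<Longrightarrow> imult A B i j = (\<Sum>k\<le>i+d. A i k * B k j)"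
  by (rule imult_eq_sum) (auto simp: banded_row_finite banded_def)

lemma banded_imult:
  assumes "banded d1 A" "banded d2 B"
  shows "banded (d1 + d2) (imult A B)"
  unfolding banded_def
proof (intro allI impI)
  fix i k assume "imult A B i k \<noteq> 0"
  then obtain l where "l \<le> i + d1" "B l k \<noteq> 0"
    unfolding imult_banded[OF assms(1)] by (metis (mono_tags, lifting) atMost_iff mult_eq_0_iff sum.neutral)
  with assms(2) show "k \<le> i + (d1 + d2)" unfolding banded_def by fastforce
qed

lemma imult_assoc:
  assumes A: "banded d1 A" and B: "banded d2 B"
  shows "imult (imult A B) C = imult A (imult B C)"
proof (intro ext)
  fix i j
  have "imult (imult A B) C i j = (\<Sum>l\<le>i+(d1+d2). (\<Sum>k\<le>i+d1. A i k * B k l) * C l j)"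
    unfolding imult_banded[OF banded_imult[OF A B]] imult_banded[OF A] ..
  also have "\<dots> = (\<Sum>k\<le>i+d1. A i k * (\<Sum>l\<le>i+(d1+d2). B k l * C l j))"
    by (simp add: sum_distrib_left sum_distrib_right mult.assoc sum.swap[of _ "{..i+(d1+d2)}"])
  also have "\<dots> = (\<Sum>k\<le>i+d1. A i k * imult B C k j)"
  proof (rule sum.cong[OF refl])
    fix k assume "k \<in> {..i+d1}"
    then have "(\<Sum>l\<le>i+(d1+d2). B k l * C l j) = (\<Sum>l\<le>k+d2. B k l * C l j)"
      by (intro sum.mono_neutral_right) (use B in \<open>auto simp: banded_def\<close>)
    then show "A i k * (\<Sum>l\<le>i+(d1+d2). B k l * C l j) = A i k * imult B C k j"
      by (simp add: imult_banded[OF B])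
  qed
  also have "\<dots> = imult A (imult B C) i j" by (simp add: imult_banded[OF A])
  finally show "imult (imult A B) C i j = imult A (imult B C) i j" .
qed

lemma rows_eq_imult:
  assumes "banded d A" "banded d A'" "rows_eq n A A'" "rows_eq (n + d) B B'"
  shows "rows_eq n (imult A B) (imult A' B')"
  unfolding rows_eq_def
proof (intro allI impI)
  fix i j assume "i < n"
  then show "imult A B i j = imult A' B' i j"
    unfolding imult_banded[OF assms(1)] imult_banded[OF assms(2)]
    by (intro sum.cong) (use assms(3,4) in \<open>auto simp: rows_eq_def\<close>)
qed

lemma rows_eq_refl [simp]: "rows_eq n A A"
  by (simp add: rows_eq_def)

lemma rows_eq_sym: "rows_eq n A B \<Longrightarrow> rows_eq n B A"
  by (simp add: rows_eq_def)

lemma rows_eq_trans: "rows_eq n A B \<Longrightarrow> rows_eq n B C \<Longrightarrow> rows_eq n A C"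
  by (simp add: rows_eq_def)

lemma imult_iId_left [simp]: "imult iId B = B"
proof (intro ext)
  fix i j show "imult iId B i j = B i j"
    by (subst imult_eq_sum[where T="{i}"]) (auto simp: iId_def split: if_splits)
qed

lemma imult_iId_right:
  assumes "banded d A" shows "imult A iId = A"
proof (intro ext)
  fix i j show "imult A iId i j = A i j"
    using imult_eq_sum[of A i "{j}" iId j, OF banded_row_finite[OF assms]] by (auto simp: iId_def split: if_splits)
qed

lemma unit_lower_banded: "unit_lower A \<Longrightarrow> banded 0 A"
  unfolding unit_lower_def banded_def by (metis add_0_right not_le)

lemma unit_lower_iId: "unit_lower iId"
  by (simp add: unit_lower_def iId_def)

lemma unit_lower_imult:
  assumes "unit_lower A" "unit_lower B"
  shows "unit_lower (imult A B)"
proof -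
  note sum_A = imult_banded[OF unit_lower_banded[OF assms(1)]]
  have "imult A B i j = 0" if "i < j" for i j
    unfolding sum_A by (rule sum.neutral) (use that assms in \<open>auto simp: unit_lower_def\<close>)
  moreover have "imult A B i i = 1" for i
  proof -
    have "imult A B i i = (\<Sum>k\<in>{i}. A i k * B k i)"
      unfolding sum_A by (rule sum.mono_neutral_right) (use assms in \<open>auto simp: unit_lower_def\<close>)
    then show ?thesis using assms by (simp add: unit_lower_def)
  qed
  ultimately show ?thesis by (simp add: unit_lower_def)
qed

text \<open>Compare the last column in which the rows of X and Y differ.\<close>

lemma unit_lower_right_cancel:
  assumes X: "banded d X" and Y: "banded d Y" and P: "unit_lower P"
    and XY: "rows_eq n (imult X P) (imult Y P)"
  shows "rows_eq n X Y"
  unfolding rows_eq_def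
proof (intro allI impI, rule ccontr)
  fix i j assume i: "i < n" and "X i j \<noteq> Y i j"
  let ?D = "{k. X i k \<noteq> Y i k}"
  have "?D \<subseteq> {..i+d}"
  proof
    fix k assume "k \<in> ?D"
    then have "X i k \<noteq> 0 \<or> Y i k \<noteq> 0" by auto
    then show "k \<in> {..i+d}" using X Y unfolding banded_def by auto
  qed
  then have fin: "finite ?D" by (rule finite_subset) simp
  define m where "m = Max ?D"
  have mD: "m \<in> ?D" unfolding m_def using fin \<open>X i j \<noteq> Y i j\<close> by (intro Max_in) auto
  have m_max: "k \<in> ?D \<Longrightarrow> k \<le> m" for k unfolding m_def using fin by simp
  have "m \<le> i + d" using mD \<open>?D \<subseteq> {..i+d}\<close> by auto
  have "imult X P i m - imult Y P i m = (\<Sum>k\<le>i+d. (X i k - Y i k) * P k m)"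
    unfolding imult_banded[OF X] imult_banded[OF Y] by (simp add: sum_subtractf left_diff_distrib)
  also have "\<dots> = (\<Sum>k\<in>{m}. (X i k - Y i k) * P k m)"
  proof (rule sum.mono_neutral_right)
    show "\<forall>k\<in>{..i + d} - {m}. (X i k - Y i k) * P k m = 0"
    proof
      fix k assume k: "k \<in> {..i + d} - {m}"
      show "(X i k - Y i k) * P k m = 0"
      proof (cases "k < m")
        case True
        with P show ?thesis by (simp add: unit_lower_def)
      next
        case False
        with k m_max have "k \<notin> ?D" by force
        then show ?thesis by simp
      qed
    qed
  qed (use \<open>m \<le> i + d\<close> in auto)
  also have "\<dots> = X i m - Y i m" using P by (simp add: unit_lower_def)
  finally have "X i m = Y i m" using XY i unfolding rows_eq_def by simp
  with mD show False by simp
qed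

function unit_lower_inv :: "imat \<Rightarrow> imat" where
  "unit_lower_inv A i j = (if i < j then 0 else if i = j then 1
      else - (\<Sum>k\<in>{j<..i}. unit_lower_inv A i k * A k j))"
  by pat_completeness auto
termination by (relation "Wellfounded.measure (\<lambda>(A, i, j). i - j)") auto

declare unit_lower_inv.simps [simp del]

lemma unit_lower_unit_lower_inv: "unit_lower (unit_lower_inv A)"
  unfolding unit_lower_def by (auto simp: unit_lower_inv.simps)

lemma unit_lower_inv_left:
  assumes A: "unit_lower A"
  shows "imult (unit_lower_inv A) A = iId"
proof (intro ext)
  fix i j
  have sum_G: "imult (unit_lower_inv A) A i j = (\<Sum>k\<le>i. unit_lower_inv A i k * A k j)"
    using imult_banded[OF unit_lower_banded[OF unit_lower_unit_lower_inv]] by simp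
  show "imult (unit_lower_inv A) A i j = iId i j"
  proof (cases "j \<le> i")
    case False
    then show ?thesis unfolding sum_G using A by (auto simp: unit_lower_def iId_def intro!: sum.neutral)
  next
    case True
    have split: "{..i} = {..<j} \<union> ({j} \<union> {j<..i})" using True by auto
    have "(\<Sum>k<j. unit_lower_inv A i k * A k j) = 0"
      using A by (auto simp: unit_lower_def intro!: sum.neutral)
    then have "imult (unit_lower_inv A) A i j
        = unit_lower_inv A i j + (\<Sum>k\<in>{j<..i}. unit_lower_inv A i k * A k j)"
      unfolding sum_G split using A by (subst sum.union_disjoint, auto simp: unit_lower_def)+
    also have "\<dots> = iId i j"
    proof (cases "j = i")
      case True
      then show ?thesis by (simp add: unit_lower_inv.simps iId_def)
    next
      case False
      with \<open>j \<le> i\<close> show ?thesis by (subst unit_lower_inv.simps) (simp add: iId_def)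
    qed
    finally show ?thesis .
  qed
qed

lemma banded_Emat: "banded 1 (Emat J)"
  unfolding banded_def Emat_def by auto

lemma imult_Emat_left: "imult (Emat J) B i j = J i * B i j + B (Suc i) j"
proof -
  have "imult (Emat J) B i j = (\<Sum>k\<in>{i, Suc i}. Emat J i k * B k j)"
    by (rule imult_eq_sum[OF banded_row_finite[OF banded_Emat]]) (auto simp: Emat_def split: if_splits)
  then show ?thesis by (simp add: Emat_def)
qed

lemma imult_Emat_right:
  assumes "finite {k. A i k \<noteq> 0}"
  shows "imult A (Emat J) i j = A i j * J j + (if 0 < j then A i (j - 1) else 0)"
proof (cases j)
  case 0
  have "imult A (Emat J) i j = (\<Sum>k\<in>{0}. A i k * Emat J k j)"
    by (rule imult_eq_sum) (use assms 0 in \<open>auto simp: Emat_def split: if_splits\<close>)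
  then show ?thesis using 0 by (simp add: Emat_def)
next
  case (Suc j')
  have "imult A (Emat J) i j = (\<Sum>k\<in>{j', j}. A i k * Emat J k j)"
    by (rule imult_eq_sum) (use assms Suc in \<open>auto simp: Emat_def split: if_splits\<close>)
  then show ?thesis using Suc by (simp add: Emat_def)
qed

lemma Fkmat_Suc:
  "Fkmat (Suc m) V i k = (if k = i then 1 else if Suc m \<le> i \<and> k = i - 1 then - V (i - Suc m) else 0)"
  unfolding Fkmat_def Fmat_def by auto

lemma unit_lower_Fkmat: "unit_lower (Fkmat (Suc m) V)"
  unfolding unit_lower_def Fkmat_Suc by auto

lemma imult_Fkmat_left:
  "imult (Fkmat (Suc m) V) B i j = B i j - (if Suc m \<le> i then V (i - Suc m) * B (i - 1) j else 0)"
proof (cases "Suc m \<le> i")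
  case True
  have "imult (Fkmat (Suc m) V) B i j = (\<Sum>k\<in>{i - 1, i}. Fkmat (Suc m) V i k * B k j)"
    by (rule imult_eq_sum[of "Fkmat (Suc m) V" i, OF banded_row_finite[OF unit_lower_banded[OF unit_lower_Fkmat]]])
      (auto simp: Fkmat_Suc split: if_splits)
  moreover have "i - 1 \<noteq> i" using True by simp
  ultimately show ?thesis using True by (simp add: Fkmat_Suc)
next
  case False
  have "imult (Fkmat (Suc m) V) B i j = (\<Sum>k\<in>{i}. Fkmat (Suc m) V i k * B k j)"
    by (rule imult_eq_sum[of "Fkmat (Suc m) V" i, OF banded_row_finite[OF unit_lower_banded[OF unit_lower_Fkmat]]])
      (use False in \<open>auto simp: Fkmat_Suc split: if_splits\<close>)
  with False show ?thesis by (simp add: Fkmat_Suc)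
qed

lemma unit_lower_prodF: "unit_lower (prodF a m)"
  by (induction m) (auto intro: unit_lower_imult unit_lower_Fkmat simp: unit_lower_iId)

lemma prodF_Suc_entry:
  "prodF a (Suc m) i j
     = prodF a m i j - (if Suc m \<le> i then a (Suc m) (i - Suc m) * prodF a m (i - 1) j else 0)"
  by (simp add: imult_Fkmat_left)

lemma prodF_below_band: "j + m < i \<Longrightarrow> prodF a m i j = 0"
proof (induction m arbitrary: i)
  case 0
  then show ?case by (simp add: iId_def)
next
  case (Suc m)
  then show ?case unfolding prodF_Suc_entry by simp
qed

lemma prodF_band_edge_nonzero:
  "m \<le> i \<Longrightarrow> (\<forall>k\<in>{1..m}. a k (i - m) \<noteq> 0) \<Longrightarrow> prodF a m i (i - m) \<noteq> 0"
proof (induction m arbitrary: i)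
  case 0 then show ?case by (simp add: iId_def)
next
  case (Suc m)
  have "prodF a m i (i - Suc m) = 0" by (rule prodF_below_band) (use Suc.prems in auto)
  moreover have "prodF a m (i - 1) (i - 1 - m) \<noteq> 0"
    by (rule Suc.IH) (use Suc.prems in auto)
  moreover have "a (Suc m) (i - Suc m) \<noteq> 0" using Suc.prems by auto
  moreover have "i - 1 - m = i - Suc m" by simp
  ultimately show ?case using Suc.prems unfolding prodF_Suc_entry by simp
qed

text \<open>exchU and exchI solve F_{m+1}(V) E(J) = E(J') F_{m+1}(w) for V and J': in row i > m
  compare the diagonal and subdiagonal entries; rows i < m and i = m give J' i = J i and
  J' m = J m + w 0.\<close>

definition exchI :: "nat \<Rightarrow> (nat \<Rightarrow> real) \<Rightarrow> (nat \<Rightarrow> real) \<Rightarrow> nat \<Rightarrow> real" where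
  "exchI m J w t = (if t < m then J t else if t = m then J m + w 0
     else (J t + w (t - m)) * J (t - 1) / (J (t - 1) + w (t - m - 1)))"

definition exchU :: "nat \<Rightarrow> (nat \<Rightarrow> real) \<Rightarrow> (nat \<Rightarrow> real) \<Rightarrow> nat \<Rightarrow> real" where
  "exchU m J w t = (J (m + t + 1) + w (t + 1)) * w t / (J (m + t) + w t)"

lemma exchI_pos:
  assumes "\<forall>t<n. 0 < J t" "\<forall>t<n. 0 < w t" "t < n"
  shows "0 < exchI m J w t"
  using assms by (simp add: exchI_def add_pos_pos)

lemma Fkmat_Emat_exchange:
  assumes J: "\<forall>t<n. 0 < J t" and w: "\<forall>t<n. 0 < w t"
  shows "rows_eq n (imult (Fkmat (Suc m) (exchU m J w)) (Emat J))
                   (imult (Emat (exchI m J w)) (Fkmat (Suc m) w))"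
  unfolding rows_eq_def imult_Fkmat_left imult_Emat_left
proof (intro allI impI)
  fix i j assume i: "i < n"
  show "Emat J i j - (if Suc m \<le> i then exchU m J w (i - Suc m) * Emat J (i - 1) j else 0)
      = exchI m J w i * Fkmat (Suc m) w i j + Fkmat (Suc m) w (Suc i) j"
  proof (cases "Suc m \<le> i")
    case False
    then consider "i < m" | "i = m" by linarith
    then show ?thesis by cases (auto simp: Emat_def Fkmat_Suc exchI_def)
  next
    case True
    define A where "A = J i + w (i - m)"
    define D where "D = J (i - 1) + w (i - Suc m)"
    have "0 < D" using True i J w by (auto simp: D_def intro!: add_pos_pos)
    have I': "exchI m J w i = A * J (i - 1) / D"
      using True by (simp add: exchI_def A_def D_def)
    have U': "exchU m J w (i - Suc m) = A * w (i - Suc m) / D"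
    proof -
      have "m + (i - Suc m) + 1 = i" "i - Suc m + 1 = i - m" "m + (i - Suc m) = i - 1"
        using True by auto
      then show ?thesis by (simp only: exchU_def A_def D_def)
    qed
    have E: "Emat J i j = (if j = i then J i else if j = Suc i then 1 else 0)"
      "Emat J (i - 1) j = (if j = i - 1 then J (i - 1) else if j = i then 1 else 0)"
      unfolding Emat_def using True by auto
    have F: "Fkmat (Suc m) w i j = (if j = i then 1 else if j = i - 1 then - w (i - Suc m) else 0)"
      "Fkmat (Suc m) w (Suc i) j = (if j = Suc i then 1 else if j = i then - w (i - m) else 0)"
      unfolding Fkmat_Suc using True by auto
    have key: "J i - A * w (i - Suc m) / D = A * J (i - 1) / D - w (i - m)"
      using \<open>0 < D\<close> by (simp add: A_def D_def field_simps)
    have ne: "i - 1 \<noteq> i" "i - 1 \<noteq> Suc i" using True by auto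
    consider "j = i - 1" | "j = i" | "j = Suc i" | "j \<noteq> i - 1" "j \<noteq> i" "j \<noteq> Suc i" by blast
    then show ?thesis
    proof cases
      case 1 then show ?thesis unfolding E F I' U' using True ne by simp
    next
      case 2 then show ?thesis unfolding E F I' U' using True ne key by simp
    next
      case 3 then show ?thesis unfolding E F I' U' using True ne by simp
    next
      case 4 then show ?thesis unfolding E F I' U' using True ne by simp
    qed
  qed
qed

text \<open>Row i of F_{m+1}(a) P is row i of P minus a_{m+1}(i-m-1) times row i-1; in column
  i-m-1 only the second term survives, with a nonzero coefficient.\<close>

lemma prodF_Suc_rows_eq:
  assumes eq: "rows_eq n (prodF a (Suc m)) (prodF b (Suc m))"
    and nz: "\<forall>k\<in>{1..m}. \<forall>t<n. a k t \<noteq> 0"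
  shows "rows_eq n (prodF a m) (prodF b m)"
    and "\<forall>t. t + Suc m < n \<longrightarrow> a (Suc m) t = b (Suc m) t"
proof -
  have rows: "(\<forall>j. prodF a m i j = prodF b m i j)
      \<and> (Suc m \<le> i \<longrightarrow> a (Suc m) (i - Suc m) = b (Suc m) (i - Suc m))" if "i < n" for i
    using that
  proof (induction i rule: less_induct)
    case (less i)
    have eqS: "prodF a (Suc m) i j = prodF b (Suc m) i j" for j
      using eq less.prems unfolding rows_eq_def by blast
    show ?case
    proof (cases "Suc m \<le> i")
      case False
      then show ?thesis using eqS unfolding prodF_Suc_entry by simp
    next
      case True
      have prev: "prodF a m (i - 1) j = prodF b m (i - 1) j" for j
        using less.IH[of "i - 1"] less.prems True by auto
      have "prodF a m i (i - Suc m) = 0" "prodF b m i (i - Suc m) = 0"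
        using True by (auto intro: prodF_below_band)
      moreover have "prodF a m (i - 1) (i - 1 - m) \<noteq> 0"
        by (rule prodF_band_edge_nonzero) (use True nz less.prems in auto)
      moreover have "i - 1 - m = i - Suc m" by simp
      ultimately have ab: "a (Suc m) (i - Suc m) = b (Suc m) (i - Suc m)"
        using eqS[of "i - Suc m"] True prev unfolding prodF_Suc_entry by simp
      then have "prodF a m i j = prodF b m i j" for j
        using eqS[of j] True prev unfolding prodF_Suc_entry by simp
      with ab show ?thesis by simp
    qed
  qed
  then show "rows_eq n (prodF a m) (prodF b m)" unfolding rows_eq_def by blast
  show "\<forall>t. t + Suc m < n \<longrightarrow> a (Suc m) t = b (Suc m) t"
    using rows[of "t + Suc m" for t] by simp
qed

lemma prodF_factors_unique:
  assumes "rows_eq n (prodF a m) (prodF b m)" "\<forall>k\<in>{1..m}. \<forall>t<n. a k t \<noteq> 0"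
  shows "\<forall>k t. k \<in> {1..m} \<and> t + k < n \<longrightarrow> a k t = b k t"
  using assms
proof (induction m)
  case 0
  then show ?case by simp
next
  case (Suc m)
  have "\<forall>k\<in>{1..m}. \<forall>t<n. a k t \<noteq> 0" using Suc.prems(2) by auto
  with prodF_Suc_rows_eq[OF Suc.prems(1)] Suc.IH show ?case
    by (metis atLeastAtMost_iff le_Suc_eq)
qed

lemma unit_lower_times_Emat:
  assumes L: "unit_lower L" and LE: "rows_eq n (imult L (Emat \<iota>)) (Emat \<kappa>)"
    and nz: "\<forall>t<n. \<iota> t \<noteq> 0"
  shows "\<forall>t<n. \<iota> t = \<kappa> t" and "rows_eq n L iId"
proof -
  have row: "L i j * \<iota> j + (if 0 < j then L i (j - 1) else 0) = Emat \<kappa> i j" if "i < n" for i j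
  proof -
    have "imult L (Emat \<iota>) i j = Emat \<kappa> i j" using LE that unfolding rows_eq_def by blast
    then show ?thesis unfolding imult_Emat_right[OF banded_row_finite[OF unit_lower_banded[OF L]]] .
  qed
  have below: "L i j = 0" if i: "i < n" and "j < i" for i j
    using \<open>j < i\<close>
  proof (induction j)
    case 0
    then have "L i 0 * \<iota> 0 = 0" using row[OF i, of 0] by (simp add: Emat_def)
    then show ?case using nz i 0 by auto
  next
    case (Suc j)
    then have "L i (Suc j) * \<iota> (Suc j) = 0" using row[OF i, of "Suc j"] by (simp add: Emat_def)
    then show ?case using nz i Suc by auto
  qed
  show "\<forall>t<n. \<iota> t = \<kappa> t"
  proof (intro allI impI)
    fix t assume t: "t < n"
    have "L t t * \<iota> t + (if 0 < t then L t (t - 1) else 0) = \<kappa> t"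
      using row[OF t, of t] by (simp add: Emat_def)
    then show "\<iota> t = \<kappa> t" using L below[OF t] by (auto simp: unit_lower_def split: if_splits)
  qed
  show "rows_eq n L iId"
    unfolding rows_eq_def
  proof (intro allI impI)
    fix i j assume "i < n"
    then show "L i j = iId i j"
      using L below by (cases i j rule: linorder_cases) (auto simp: unit_lower_def iId_def)
  qed
qed

text \<open>L = P' P^{-1} satisfies L E(\<kappa>) = E(\<kappa>') once Q is cancelled.\<close>

lemma unit_lower_Emat_unique:
  assumes P: "unit_lower P" and P': "unit_lower P'" and Q: "unit_lower Q"
    and H: "rows_eq n (imult P (Emat \<iota>)) (imult (Emat \<kappa>) Q)"
    and H': "rows_eq n (imult P' (Emat \<iota>)) (imult (Emat \<kappa>') Q)"
    and nz: "\<forall>t<n. \<kappa> t \<noteq> 0"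
  shows "\<forall>t<n. \<kappa> t = \<kappa>' t" and "rows_eq n P P'"
proof -
  define G where "G = unit_lower_inv P"
  define L where "L = imult P' G"
  have G: "unit_lower G" unfolding G_def by (rule unit_lower_unit_lower_inv)
  have GP: "imult G P = iId" unfolding G_def by (rule unit_lower_inv_left[OF P])
  have L: "unit_lower L" unfolding L_def by (rule unit_lower_imult[OF P' G])
  note bG = unit_lower_banded[OF G] and bP = unit_lower_banded[OF P]
    and bP' = unit_lower_banded[OF P'] and bL = unit_lower_banded[OF L]
  have "rows_eq n (imult G (imult P (Emat \<iota>))) (imult G (imult (Emat \<kappa>) Q))"
    by (rule rows_eq_imult[OF bG bG]) (use H in simp_all)
  then have "rows_eq n (Emat \<iota>) (imult (imult G (Emat \<kappa>)) Q)"
    using imult_assoc[OF bG bP, where C = "Emat \<iota>"] imult_assoc[OF bG banded_Emat, where C = Q] GP by simp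
  then have "rows_eq n (imult P' (Emat \<iota>)) (imult P' (imult (imult G (Emat \<kappa>)) Q))"
    by (intro rows_eq_imult[OF bP' bP']) simp_all
  moreover have "imult P' (imult (imult G (Emat \<kappa>)) Q) = imult (imult L (Emat \<kappa>)) Q"
    unfolding L_def using imult_assoc[OF bP' banded_imult[OF bG banded_Emat], where C = Q]
      imult_assoc[OF bP' bG, where C = "Emat \<kappa>"] by simp
  ultimately have "rows_eq n (imult (imult L (Emat \<kappa>)) Q) (imult (Emat \<kappa>') Q)"
    using H' by (metis rows_eq_sym rows_eq_trans)
  then have LE: "rows_eq n (imult L (Emat \<kappa>)) (Emat \<kappa>')"
    using unit_lower_right_cancel[OF _ banded_Emat Q] banded_imult[OF bL banded_Emat] by simp
  show "\<forall>t<n. \<kappa> t = \<kappa>' t" by (rule unit_lower_times_Emat(1)[OF L LE nz])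
  have "rows_eq n (imult L P) (imult iId P)"
    by (rule rows_eq_imult[OF bL unit_lower_banded[OF unit_lower_iId]])
      (use unit_lower_times_Emat(2)[OF L LE nz] in simp_all)
  moreover have "imult L P = P'"
    unfolding L_def using imult_assoc[OF bP' bG, where C = P] GP imult_iId_right[OF bP'] by simp
  ultimately show "rows_eq n P P'" by (simp add: rows_eq_sym)
qed

fun passI :: "(nat \<Rightarrow> nat \<Rightarrow> real) \<Rightarrow> (nat \<Rightarrow> real) \<Rightarrow> nat \<Rightarrow> nat \<Rightarrow> real" where
  "passI u \<iota> 0 = \<iota>"
| "passI u \<iota> (Suc m) = exchI m (passI u \<iota> m) (u (Suc m))"

fun passU :: "(nat \<Rightarrow> nat \<Rightarrow> real) \<Rightarrow> (nat \<Rightarrow> real) \<Rightarrow> nat \<Rightarrow> nat \<Rightarrow> real" where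
  "passU u \<iota> 0 = undefined"
| "passU u \<iota> (Suc m) = exchU m (passI u \<iota> m) (u (Suc m))"

lemma passI_pos:
  assumes "\<forall>k\<in>{1..m}. \<forall>t<n. 0 < u k t" "\<forall>t<n. 0 < \<iota> t"
  shows "\<forall>t<n. 0 < passI u \<iota> m t"
  using assms by (induction m) (auto intro: exchI_pos)

lemma prodF_passU_Emat:
  assumes "\<forall>k\<in>{1..m}. \<forall>t<n. 0 < u k t" "\<forall>t<n. 0 < \<iota> t"
  shows "rows_eq n (imult (prodF (passU u \<iota>) m) (Emat \<iota>)) (imult (Emat (passI u \<iota> m)) (prodF u m))"
  using assms
proof (induction m)
  case 0
  then show ?case using imult_iId_right[OF banded_Emat] by simp
next
  case (Suc m)
  let ?J = "passI u \<iota> m" and ?w = "u (Suc m)"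
  let ?F = "Fkmat (Suc m) (exchU m ?J ?w)"
  have pos: "\<forall>t<n. 0 < ?J t" "\<forall>t<n. 0 < ?w t"
    using passI_pos[of m n u \<iota>] Suc.prems by auto
  have IH: "rows_eq n (imult (prodF (passU u \<iota>) m) (Emat \<iota>)) (imult (Emat ?J) (prodF u m))"
    using Suc by auto
  note bF = unit_lower_banded[OF unit_lower_Fkmat] and bP = unit_lower_banded[OF unit_lower_prodF]
  have "rows_eq n (imult ?F (imult (prodF (passU u \<iota>) m) (Emat \<iota>)))
      (imult ?F (imult (Emat ?J) (prodF u m)))"
    by (rule rows_eq_imult[OF bF bF]) (use IH in simp_all)
  then have "rows_eq n (imult (prodF (passU u \<iota>) (Suc m)) (Emat \<iota>))
      (imult (imult ?F (Emat ?J)) (prodF u m))"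
    by (simp add: imult_assoc[OF bF bP] imult_assoc[OF bF banded_Emat])
  moreover have "rows_eq n (imult (imult ?F (Emat ?J)) (prodF u m))
      (imult (imult (Emat (passI u \<iota> (Suc m))) (Fkmat (Suc m) ?w)) (prodF u m))"
  proof (rule rows_eq_imult)
    show "banded 1 (imult ?F (Emat ?J))" using banded_imult[OF bF banded_Emat] by simp
    show "banded 1 (imult (Emat (passI u \<iota> (Suc m))) (Fkmat (Suc m) ?w))"
      using banded_imult[OF banded_Emat bF] by simp
  qed (use Fkmat_Emat_exchange[OF pos] in simp_all)
  ultimately show ?case
    by (simp add: rows_eq_trans imult_assoc[OF banded_Emat bF])
qed

lemma passU_passI_unique:
  assumes u: "\<forall>k\<in>{1..m}. \<forall>t<n. 0 < u k t" and \<iota>: "\<forall>t<n. 0 < \<iota> t"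
    and a: "\<forall>k\<in>{1..m}. \<forall>t<n. a k t \<noteq> 0" and \<kappa>: "\<forall>t<n. \<kappa> t \<noteq> 0"
    and eq: "rows_eq n (imult (prodF a m) (Emat \<iota>)) (imult (Emat \<kappa>) (prodF u m))"
  shows "\<forall>t<n. \<kappa> t = passI u \<iota> m t"
    and "\<forall>k t. k \<in> {1..m} \<and> t + k < n \<longrightarrow> a k t = passU u \<iota> k t"
proof -
  note uniq = unit_lower_Emat_unique[OF unit_lower_prodF unit_lower_prodF unit_lower_prodF
      eq prodF_passU_Emat[OF u \<iota>] \<kappa>]
  show "\<forall>t<n. \<kappa> t = passI u \<iota> m t" by (rule uniq(1))
  show "\<forall>k t. k \<in> {1..m} \<and> t + k < n \<longrightarrow> a k t = passU u \<iota> k t"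
    by (rule prodF_factors_unique[OF uniq(2) a])
qed

lemma inM_eventually_pos: "inM f \<Longrightarrow> \<forall>\<^sub>F e in at_right 0. 0 < f e"
  unfolding inM_def by (auto intro: eventually_at_rightI)

lemma inM_common_radius:
  assumes "inM f" "inM g"
  obtains \<delta> Lf Lg where "0 < \<delta>" "continuous_on {0<..<\<delta>} f" "continuous_on {0<..<\<delta>} g"
    "\<forall>e\<in>{0<..<\<delta>}. 0 < f e \<and> 0 < g e"
    "((\<lambda>e. e * ln (f e)) \<longlongrightarrow> Lf) (at_right 0)" "((\<lambda>e. e * ln (g e)) \<longlongrightarrow> Lg) (at_right 0)"
proof -
  obtain \<delta>f Lf where f: "0 < \<delta>f" "continuous_on {0<..<\<delta>f} f" "\<forall>e\<in>{0<..<\<delta>f}. 0 < f e"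
    "((\<lambda>e. e * ln (f e)) \<longlongrightarrow> Lf) (at_right 0)" using assms(1) unfolding inM_def by blast
  obtain \<delta>g Lg where g: "0 < \<delta>g" "continuous_on {0<..<\<delta>g} g" "\<forall>e\<in>{0<..<\<delta>g}. 0 < g e"
    "((\<lambda>e. e * ln (g e)) \<longlongrightarrow> Lg) (at_right 0)" using assms(2) unfolding inM_def by blast
  have sub: "{0<..<min \<delta>f \<delta>g} \<subseteq> {0<..<\<delta>f}" "{0<..<min \<delta>f \<delta>g} \<subseteq> {0<..<\<delta>g}" by auto
  show ?thesis
    by (rule that[of "min \<delta>f \<delta>g"]) (use f g continuous_on_subset[OF _ sub(1)]
        continuous_on_subset[OF _ sub(2)] in auto)
qed

text \<open>e ln (f + g) lies between max(e ln f, e ln g) and that maximum plus e ln 2.\<close>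

lemma inM_add:
  assumes "inM f" "inM g"
  shows "inM (\<lambda>e. f e + g e)"
proof -
  obtain \<delta> Lf Lg where \<delta>: "0 < \<delta>" "continuous_on {0<..<\<delta>} f" "continuous_on {0<..<\<delta>} g"
    and pos: "\<forall>e\<in>{0<..<\<delta>}. 0 < f e \<and> 0 < g e"
    and Lf: "((\<lambda>e. e * ln (f e)) \<longlongrightarrow> Lf) (at_right 0)"
    and Lg: "((\<lambda>e. e * ln (g e)) \<longlongrightarrow> Lg) (at_right 0)"
    using inM_common_radius[OF assms] by blast
  let ?m = "\<lambda>e. max (e * ln (f e)) (e * ln (g e))"
  have lower: "?m e \<le> e * ln (f e + g e)" if "e \<in> {0<..<\<delta>}" for e
  proof -
    have "0 < f e" "0 < g e" using that pos by auto
    then have "ln (f e) \<le> ln (f e + g e)" "ln (g e) \<le> ln (f e + g e)" by auto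
    then show ?thesis using that by (auto intro: mult_left_mono)
  qed
  have upper: "e * ln (f e + g e) \<le> ?m e + e * ln 2" if "e \<in> {0<..<\<delta>}" for e
  proof -
    have f: "0 < f e" and g: "0 < g e" using that pos by auto
    then have "ln (f e + g e) \<le> ln (2 * max (f e) (g e))" by simp
    also have "\<dots> = ln 2 + max (ln (f e)) (ln (g e))" using f g by (simp add: ln_mult max_def)
    finally have "e * ln (f e + g e) \<le> e * (ln 2 + max (ln (f e)) (ln (g e)))"
      using that by (auto intro: mult_left_mono)
    also have "\<dots> = ?m e + e * ln 2"
      using that by (simp add: algebra_simps max_def mult_le_cancel_left_pos)
    finally show ?thesis .
  qed
  have m: "(?m \<longlongrightarrow> max Lf Lg) (at_right 0)" by (intro tendsto_max Lf Lg)
  have "((\<lambda>e. ?m e + e * ln 2) \<longlongrightarrow> max Lf Lg + 0 * ln 2) (at_right 0)"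
    by (intro tendsto_add m tendsto_mult tendsto_const) (simp add: tendsto_ident_at)
  then have "((\<lambda>e. e * ln (f e + g e)) \<longlongrightarrow> max Lf Lg) (at_right 0)"
    using tendsto_sandwich[OF eventually_at_rightI[OF lower \<delta>(1)] eventually_at_rightI[OF upper \<delta>(1)] m]
    by simp
  moreover have "continuous_on {0<..<\<delta>} (\<lambda>e. f e + g e)" using \<delta> by (intro continuous_on_add)
  moreover have "\<forall>e\<in>{0<..<\<delta>}. 0 < f e + g e" using pos by (simp add: add_pos_pos)
  ultimately show ?thesis unfolding inM_def using \<delta>(1) by blast
qed

lemma inM_mult:
  assumes "inM f" "inM g"
  shows "inM (\<lambda>e. f e * g e)"
proof -
  obtain \<delta> Lf Lg where \<delta>: "0 < \<delta>" "continuous_on {0<..<\<delta>} f" "continuous_on {0<..<\<delta>} g"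
    and pos: "\<forall>e\<in>{0<..<\<delta>}. 0 < f e \<and> 0 < g e"
    and Lf: "((\<lambda>e. e * ln (f e)) \<longlongrightarrow> Lf) (at_right 0)"
    and Lg: "((\<lambda>e. e * ln (g e)) \<longlongrightarrow> Lg) (at_right 0)"
    using inM_common_radius[OF assms] by blast
  have "\<forall>\<^sub>F e in at_right 0. e * ln (f e) + e * ln (g e) = e * ln (f e * g e)"
  proof (rule eventually_at_rightI[OF _ \<delta>(1)])
    fix e assume "e \<in> {0<..<\<delta>}"
    with pos have "0 < f e" "0 < g e" by auto
    then show "e * ln (f e) + e * ln (g e) = e * ln (f e * g e)" by (simp add: ln_mult algebra_simps)
  qed
  with tendsto_add[OF Lf Lg] have "((\<lambda>e. e * ln (f e * g e)) \<longlongrightarrow> Lf + Lg) (at_right 0)"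
    by (rule Lim_transform_eventually)
  moreover have "continuous_on {0<..<\<delta>} (\<lambda>e. f e * g e)" using \<delta> by (intro continuous_on_mult)
  moreover have "\<forall>e\<in>{0<..<\<delta>}. 0 < f e * g e" using pos by simp
  ultimately show ?thesis unfolding inM_def using \<delta>(1) by blast
qed

lemma inM_inverse:
  assumes "inM f"
  shows "inM (\<lambda>e. inverse (f e))"
proof -
  obtain \<delta> L where \<delta>: "0 < \<delta>" "continuous_on {0<..<\<delta>} f" and pos: "\<forall>e\<in>{0<..<\<delta>}. 0 < f e"
    and L: "((\<lambda>e. e * ln (f e)) \<longlongrightarrow> L) (at_right 0)"
    using assms unfolding inM_def by blast
  have "\<forall>\<^sub>F e in at_right 0. - (e * ln (f e)) = e * ln (inverse (f e))"
  proof (rule eventually_at_rightI[OF _ \<delta>(1)])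
    fix e assume "e \<in> {0<..<\<delta>}"
    with pos show "- (e * ln (f e)) = e * ln (inverse (f e))" by (simp add: ln_inverse)
  qed
  with tendsto_minus[OF L] have "((\<lambda>e. e * ln (inverse (f e))) \<longlongrightarrow> - L) (at_right 0)"
    by (rule Lim_transform_eventually)
  moreover have "continuous_on {0<..<\<delta>} (\<lambda>e. inverse (f e))"
    using \<delta>(2) pos by (intro continuous_on_inverse) auto
  moreover have "\<forall>e\<in>{0<..<\<delta>}. 0 < inverse (f e)" using pos by simp
  ultimately show ?thesis unfolding inM_def using \<delta>(1) by blast
qed

definition exchI_expr :: "nat \<Rightarrow> (nat \<Rightarrow> sfexpr) \<Rightarrow> (nat \<Rightarrow> sfexpr) \<Rightarrow> nat \<Rightarrow> sfexpr" where
  "exchI_expr m J w t = (if t < m then J t else if t = m then SAdd (J m) (w 0)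
     else SMul (SMul (SAdd (J t) (w (t - m))) (J (t - 1))) (SInv (SAdd (J (t - 1)) (w (t - m - 1)))))"

definition exchU_expr :: "nat \<Rightarrow> (nat \<Rightarrow> sfexpr) \<Rightarrow> (nat \<Rightarrow> sfexpr) \<Rightarrow> nat \<Rightarrow> sfexpr" where
  "exchU_expr m J w t = SMul (SMul (SAdd (J (m + t + 1)) (w (t + 1))) (w t)) (SInv (SAdd (J (m + t)) (w t)))"

lemma sf_eval_exchI_expr:
  "sf_eval \<rho> (exchI_expr m J w t) e = exchI m (\<lambda>s. sf_eval \<rho> (J s) e) (\<lambda>s. sf_eval \<rho> (w s) e) t"
  by (simp add: exchI_expr_def exchI_def divide_inverse)

lemma sf_eval_exchU_expr:
  "sf_eval \<rho> (exchU_expr m J w t) e = exchU m (\<lambda>s. sf_eval \<rho> (J s) e) (\<lambda>s. sf_eval \<rho> (w s) e) t"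
  by (simp add: exchU_expr_def exchU_def divide_inverse)

lemma inM_exchI_expr:
  "\<forall>s. inM (sf_eval \<rho> (J s)) \<Longrightarrow> \<forall>s. inM (sf_eval \<rho> (w s)) \<Longrightarrow> inM (sf_eval \<rho> (exchI_expr m J w t))"
  by (auto simp: exchI_expr_def intro!: inM_add inM_mult inM_inverse)

lemma inM_exchU_expr:
  "\<forall>s. inM (sf_eval \<rho> (J s)) \<Longrightarrow> \<forall>s. inM (sf_eval \<rho> (w s)) \<Longrightarrow> inM (sf_eval \<rho> (exchU_expr m J w t))"
  by (auto simp: exchU_expr_def intro!: inM_add inM_mult inM_inverse)

fun passI_expr :: "nat \<Rightarrow> nat \<Rightarrow> sfexpr" where
  "passI_expr 0 = (\<lambda>t. SVar (IV t))"
| "passI_expr (Suc m) = exchI_expr m (passI_expr m) (\<lambda>t. SVar (UV (Suc m) t))"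

fun passU_expr :: "nat \<Rightarrow> nat \<Rightarrow> sfexpr" where
  "passU_expr 0 = undefined"
| "passU_expr (Suc m) = exchU_expr m (passI_expr m) (\<lambda>t. SVar (UV (Suc m) t))"

lemma prodF_cong: "(\<And>k. k \<in> {1..m} \<Longrightarrow> a k = b k) \<Longrightarrow> prodF a m = prodF b m"
  by (induction m) auto

lemma sf_eval_passI_expr:
  "sf_eval (inp U I) (passI_expr m t) e = passI (\<lambda>k i. U k i e) (\<lambda>i. I i e) m t"
proof (induction m arbitrary: t)
  case 0
  then show ?case by (simp add: inp_def)
next
  case (Suc m)
  then show ?case by (simp add: sf_eval_exchI_expr inp_def)
qed

lemma sf_eval_passU_expr:
  "0 < k \<Longrightarrow> sf_eval (inp U I) (passU_expr k t) e = passU (\<lambda>k i. U k i e) (\<lambda>i. I i e) k t"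
  by (cases k) (simp_all add: sf_eval_exchU_expr sf_eval_passI_expr inp_def)

lemma inM_passI_expr:
  assumes "\<forall>k\<in>{1..m}. \<forall>i. inM (U k i)" "\<forall>i. inM (I i)"
  shows "inM (sf_eval (inp U I) (passI_expr m t))"
  using assms
proof (induction m arbitrary: t)
  case 0
  then show ?case by (simp add: inp_def)
next
  case (Suc m)
  then show ?case by (auto simp: inp_def intro!: inM_exchI_expr)
qed

lemma inM_passU_expr:
  assumes "k \<in> {1..m}" "\<forall>k\<in>{1..m}. \<forall>i. inM (U k i)" "\<forall>i. inM (I i)"
  shows "inM (sf_eval (inp U I) (passU_expr k t))"
proof -
  obtain l where "k = Suc l" using assms(1) by (cases k) auto
  with assms show ?thesis
    by (auto simp: inp_def intro!: inM_exchU_expr inM_passI_expr)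
qed

lemma eventually_pos_rows:
  fixes U :: "'a \<Rightarrow> nat \<Rightarrow> real \<Rightarrow> real"
  assumes "finite K" "\<forall>k\<in>K. \<forall>t. inM (U k t)"
  shows "\<forall>\<^sub>F e in at_right 0. \<forall>k\<in>K. \<forall>t<n. 0 < U k t e"
proof -
  have "\<forall>\<^sub>F e in at_right 0. \<forall>p\<in>K \<times> {..<n}. 0 < U (fst p) (snd p) e"
    using assms by (intro eventually_ball_finite) (auto intro: inM_eventually_pos)
  then show ?thesis by (rule eventually_mono) auto
qed

lemma eventually_pos_entries:
  fixes I :: "nat \<Rightarrow> real \<Rightarrow> real"
  shows "\<forall>t. inM (I t) \<Longrightarrow> \<forall>\<^sub>F e in at_right 0. \<forall>t<n. 0 < I t e"
  using eventually_pos_rows[of "{0}" "\<lambda>_. I" n] by simp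

text \<open>In the first n rows both sides vanish beyond column n, so only finitely many entry
  identities have to hold simultaneously.\<close>

lemma rel_eq_eventually_rows_eq:
  assumes "rel_eq N U I U' I'"
  shows "\<forall>\<^sub>F e in at_right 0. rows_eq n
     (imult (prodF (\<lambda>k m. U' k m e) (Suc N)) (Emat (\<lambda>m. I m e)))
     (imult (Emat (\<lambda>m. I' m e)) (prodF (\<lambda>k m. U k m e) (Suc N)))"
proof -
  have "\<forall>\<^sub>F e in at_right 0. \<forall>p\<in>{..<n} \<times> {..n}.
      imult (prodF (\<lambda>k m. U' k m e) (Suc N)) (Emat (\<lambda>m. I m e)) (fst p) (snd p)
    = imult (Emat (\<lambda>m. I' m e)) (prodF (\<lambda>k m. U k m e) (Suc N)) (fst p) (snd p)"
    using assms unfolding rel_eq_def by (intro eventually_ball_finite) auto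
  then show ?thesis
  proof (rule eventually_mono)
    fix e
    let ?A = "imult (prodF (\<lambda>k m. U' k m e) (Suc N)) (Emat (\<lambda>m. I m e))"
    let ?B = "imult (Emat (\<lambda>m. I' m e)) (prodF (\<lambda>k m. U k m e) (Suc N))"
    assume eq: "\<forall>p\<in>{..<n} \<times> {..n}. ?A (fst p) (snd p) = ?B (fst p) (snd p)"
    have "banded (0 + 1) ?A" by (rule banded_imult[OF unit_lower_banded[OF unit_lower_prodF] banded_Emat])
    moreover have "banded (1 + 0) ?B" by (rule banded_imult[OF banded_Emat unit_lower_banded[OF unit_lower_prodF]])
    ultimately have "?A i j = 0" "?B i j = 0" if "i < n" "n < j" for i j
      using that unfolding banded_def by force+
    with eq show "rows_eq n ?A ?B" unfolding rows_eq_def by (metis SigmaI atMost_iff lessThan_iff fst_conv snd_conv not_le)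
  qed
qed

lemma rel_eq_passU_passI:
  assumes U: "\<forall>k\<in>{1..Suc N}. \<forall>i. inM (U k i)" and I: "\<forall>i. inM (I i)"
  shows "rel_eq N U I (\<lambda>k i. sf_eval (inp U I) (passU_expr k i))
                      (\<lambda>i. sf_eval (inp U I) (passI_expr (Suc N) i))"
  unfolding rel_eq_def
proof (intro allI)
  fix i j
  have "\<forall>\<^sub>F e in at_right 0. (\<forall>k\<in>{1..Suc N}. \<forall>t<Suc i. 0 < U k t e) \<and> (\<forall>t<Suc i. 0 < I t e)"
    using U I by (intro eventually_conj eventually_pos_rows eventually_pos_entries) auto
  then show "\<forall>\<^sub>F e in at_right 0.
      imult (prodF (\<lambda>k m. sf_eval (inp U I) (passU_expr k m) e) (Suc N)) (Emat (\<lambda>m. I m e)) i j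
    = imult (Emat (\<lambda>m. sf_eval (inp U I) (passI_expr (Suc N) m) e)) (prodF (\<lambda>k m. U k m e) (Suc N)) i j"
  proof (rule eventually_mono)
    fix e
    assume "(\<forall>k\<in>{1..Suc N}. \<forall>t<Suc i. 0 < U k t e) \<and> (\<forall>t<Suc i. 0 < I t e)"
    then have "rows_eq (Suc i)
        (imult (prodF (passU (\<lambda>k i. U k i e) (\<lambda>i. I i e)) (Suc N)) (Emat (\<lambda>i. I i e)))
        (imult (Emat (passI (\<lambda>k i. U k i e) (\<lambda>i. I i e) (Suc N))) (prodF (\<lambda>k i. U k i e) (Suc N)))"
      by (intro prodF_passU_Emat) auto
    moreover have "prodF (\<lambda>k m. sf_eval (inp U I) (passU_expr k m) e) (Suc N)
        = prodF (passU (\<lambda>k i. U k i e) (\<lambda>i. I i e)) (Suc N)"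
      by (rule prodF_cong) (simp add: sf_eval_passU_expr)
    moreover have "(\<lambda>m. sf_eval (inp U I) (passI_expr (Suc N) m) e)
        = passI (\<lambda>k i. U k i e) (\<lambda>i. I i e) (Suc N)"
      by (rule ext) (rule sf_eval_passI_expr)
    ultimately show "imult (prodF (\<lambda>k m. sf_eval (inp U I) (passU_expr k m) e) (Suc N)) (Emat (\<lambda>m. I m e)) i j
      = imult (Emat (\<lambda>m. sf_eval (inp U I) (passI_expr (Suc N) m) e)) (prodF (\<lambda>k m. U k m e) (Suc N)) i j"
      unfolding rows_eq_def by simp
  qed
qed

lemma rel_eq_unique:
  assumes U: "\<forall>k\<in>{1..Suc N}. \<forall>i. inM (U k i)" and I: "\<forall>i. inM (I i)"
    and U': "\<forall>k\<in>{1..Suc N}. \<forall>i. inM (U' k i)" and I': "\<forall>i. inM (I' i)"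
    and rel: "rel_eq N U I U' I'"
  shows "k \<in> {1..Suc N} \<Longrightarrow> germ_eq (U' k i) (sf_eval (inp U I) (passU_expr k i))"
    and "germ_eq (I' i) (sf_eval (inp U I) (passI_expr (Suc N) i))"
proof -
  let ?u = "\<lambda>e k i. U k i e" and ?\<iota> = "\<lambda>e i. I i e"
  have agree: "\<forall>\<^sub>F e in at_right 0. (\<forall>t<n. I' t e = passI (?u e) (?\<iota> e) (Suc N) t)
      \<and> (\<forall>k t. k \<in> {1..Suc N} \<and> t + k < n \<longrightarrow> U' k t e = passU (?u e) (?\<iota> e) k t)" for n
  proof -
    have "\<forall>\<^sub>F e in at_right 0. ((\<forall>k\<in>{1..Suc N}. \<forall>t<n. 0 < U k t e) \<and> (\<forall>t<n. 0 < I t e))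
        \<and> ((\<forall>k\<in>{1..Suc N}. \<forall>t<n. 0 < U' k t e) \<and> (\<forall>t<n. 0 < I' t e))
        \<and> rows_eq n (imult (prodF (\<lambda>k m. U' k m e) (Suc N)) (Emat (\<lambda>m. I m e)))
                    (imult (Emat (\<lambda>m. I' m e)) (prodF (\<lambda>k m. U k m e) (Suc N)))"
      (is "\<forall>\<^sub>F e in _. ?hyps e")
      using U I U' I' rel
      by (intro eventually_conj eventually_pos_rows eventually_pos_entries rel_eq_eventually_rows_eq) auto
    then show ?thesis
    proof (rule eventually_mono)
      fix e assume "?hyps e"
      then have "\<forall>k\<in>{1..Suc N}. \<forall>t<n. 0 < U k t e" "\<forall>t<n. 0 < I t e"
        "\<forall>k\<in>{1..Suc N}. \<forall>t<n. U' k t e \<noteq> 0" "\<forall>t<n. I' t e \<noteq> 0"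
        "rows_eq n (imult (prodF (\<lambda>k m. U' k m e) (Suc N)) (Emat (\<lambda>m. I m e)))
                   (imult (Emat (\<lambda>m. I' m e)) (prodF (\<lambda>k m. U k m e) (Suc N)))"
        by (auto simp: less_imp_neq[symmetric])
      from passU_passI_unique[OF this] show "(\<forall>t<n. I' t e = passI (?u e) (?\<iota> e) (Suc N) t)
        \<and> (\<forall>k t. k \<in> {1..Suc N} \<and> t + k < n \<longrightarrow> U' k t e = passU (?u e) (?\<iota> e) k t)"
        by blast
    qed
  qed
  show "germ_eq (U' k i) (sf_eval (inp U I) (passU_expr k i))" if "k \<in> {1..Suc N}"
    using agree[of "i + k + 1"] that unfolding germ_eq_def
    by (auto elim!: eventually_mono simp: sf_eval_passU_expr)
  show "germ_eq (I' i) (sf_eval (inp U I) (passI_expr (Suc N) i))"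
    using agree[of "Suc i"] unfolding germ_eq_def sf_eval_passI_expr
    by (rule eventually_mono) simp
qed

theorem proposition3p6:
  fixes N :: nat
  shows "\<exists>eU :: nat \<Rightarrow> nat \<Rightarrow> sfexpr. \<exists>eI :: nat \<Rightarrow> sfexpr.
    \<forall>U :: nat \<Rightarrow> nat \<Rightarrow> real \<Rightarrow> real. \<forall>I :: nat \<Rightarrow> real \<Rightarrow> real.
      (\<forall>k\<in>{1..Suc N}. \<forall>i. inM (U k i)) \<and> (\<forall>i. inM (I i)) \<longrightarrow>
      (let U' = (\<lambda>k i. sf_eval (inp U I) (eU k i));
           I' = (\<lambda>i. sf_eval (inp U I) (eI i))
       in (\<forall>k\<in>{1..Suc N}. \<forall>i. inM (U' k i)) \<and> (\<forall>i. inM (I' i))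
          \<and> rel_eq N U I U' I'
          \<and> (\<forall>U'' I''. (\<forall>k\<in>{1..Suc N}. \<forall>i. inM (U'' k i)) \<and> (\<forall>i. inM (I'' i))
                  \<and> rel_eq N U I U'' I'' \<longrightarrow>
                (\<forall>k\<in>{1..Suc N}. \<forall>i. germ_eq (U'' k i) (U' k i))
                \<and> (\<forall>i. germ_eq (I'' i) (I' i))))"
  unfolding Let_def
  by (intro exI[of _ passU_expr] exI[of _ "passI_expr (Suc N)"] allI impI conjI)
    (blast intro: inM_passU_expr inM_passI_expr rel_eq_passU_passI rel_eq_unique)+

end
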